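(* Let $(\lambda_k)_{k\in\mathbb{N}}$ be a decreasing sequence of positive numbers with $\lambda_k\to0$, and for each $k$ let $x^k$ be any stationary point of problem (P$_{\lambda_k}$). Then $(x^k)$ is bounded. Furthermore, suppose $\mathrm{int}\,D\cap\mathrm{int}\{x:Ax\in C\}\ne\emptyset$ and there exists $\hat x\in D$ with $A\hat x\in C$ such that $Q_{\lambda_k}(x^k)/\lambda_k\le\|\hat x\|_1/\|\hat x\|_2$ for all $k\in\mathbb{N}$. Then every accumulation point $x^\star$ of $(x^k)$ satisfies: (i) $x^\star\in D$ and $Ax^\star\in C$; (ii) $x^\star$ is a stationary point of problem (P).
   Context: Let $A\in\mathbb{R}^{m\times n}$, $b\in\mathbb{R}^m$, $\epsilon\ge0$ with $\|b\|_2>\epsilon$, $d>0$. $C:=\{y\in\mathbb{R}^m:\|y-b\|_2\le\epsilon\}$, $D:=\{x\in\mathbb{R}^n:\|x\|_2\le d\}$; $\iota_S$ is the indicator function of $S$. $\mathrm{env}(y):=\frac12((\|y-b\|_2-\epsilon)_+)^2$. $Q_\lambda(x):=(\lambda\|x\|_1+\mathrm{env}(Ax))/\|x\|_2$ on $D\setminus\{0_n\}$, $+\infty$ elsewhere. Problem (P): minimize $\|x\|_1/\|x\|_2$ subject to $\|Ax-b\|_2\le\epsilon$, $\|x\|_2\le d$, with extended objective $\Phi(x):=\|x\|_1/\|x\|_2+\iota_D(x)+\iota_C(Ax)$ for $x\ne0_n$, $\Phi(0_n)=+\infty$. Problem (P$_\lambda$): minimize $Q_\lambda$. Fréchet subdifferential: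 $\hat\partial\varphi(x):=\{v:\liminf_{z\to x,z\ne x}\frac{\varphi(z)-\varphi(x)-\langle v,z-x\rangle}{\|z-x\|_2}\ge0\}$ for $x\in\mathrm{dom}\,\varphi$. A stationary point of (P) (resp. (P$_\lambda$)) is an $x^\star$ with $0\in\hat\partial\Phi(x^\star)$ (resp. $0\in\hat\partial Q_\lambda(x^\star)$). *)

theory Defs
  imports "HOL-Analysis.Analysis"
begin

definition l1norm :: "real^'n \<Rightarrow> real" where
  "l1norm x = (\<Sum>i\<in>UNIV. \<bar>x $ i\<bar>)"

definition Cset :: "real^'m \<Rightarrow> real \<Rightarrow> (real^'m) set" where
  "Cset b \<epsilon> = {y. norm (y - b) \<le> \<epsilon>}"

definition Dset :: "real \<Rightarrow> (real^'n) set" where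
  "Dset d = {x. norm x \<le> d}"

definition env :: "real^'m \<Rightarrow> real \<Rightarrow> real^'m \<Rightarrow> real" where
  "env b \<epsilon> y = (1/2) * (max 0 (norm (y - b) - \<epsilon>))\<^sup>2"

definition Qlam :: "real^'n^'m \<Rightarrow> real^'m \<Rightarrow> real \<Rightarrow> real \<Rightarrow> real \<Rightarrow> real^'n \<Rightarrow> ereal" where
  "Qlam A b \<epsilon> d lam x =
     (if x \<in> Dset d \<and> x \<noteq> 0
      then ereal ((lam * l1norm x + env b \<epsilon> (A *v x)) / norm x)
      else \<infinity>)"

text \<open>Extended objective of (P).\<close>
definition Phi :: "real^'n^'m \<Rightarrow> real^'m \<Rightarrow> real \<Rightarrow> real \<Rightarrow> real^'n \<Rightarrow> ereal" where
  "Phi A b \<epsilon> d x =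
     (if x \<noteq> 0 \<and> x \<in> Dset d \<and> A *v x \<in> Cset b \<epsilon>
      then ereal (l1norm x / norm x)
      else \<infinity>)"

definition frechet_subdiff :: "('a::real_inner \<Rightarrow> ereal) \<Rightarrow> 'a \<Rightarrow> 'a set" where
  "frechet_subdiff \<phi> x =
     {v. \<bar>\<phi> x\<bar> \<noteq> \<infinity> \<and>
         Liminf (at x) (\<lambda>z. (\<phi> z - \<phi> x - ereal (v \<bullet> (z - x))) / ereal (norm (z - x))) \<ge> 0}"

definition stationary :: "('a::real_inner \<Rightarrow> ereal) \<Rightarrow> 'a \<Rightarrow> bool" where
  "stationary \<phi> x \<longleftrightarrow> 0 \<in> frechet_subdiff \<phi> x"

end

theory Submission
  imports Defs
begin

text \<open>Both objectives are quotients \<open>N / norm\<close> on a set \<open>S\<close> with \<open>N \<ge> 0\<close>. For such a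
  quotient, Frechet stationarity at \<open>x \<noteq> 0\<close> amounts to the first-order inequality
  \<open>N x * (z \<bullet> x) \<le> N z * (norm x)\<^sup>2\<close> for all \<open>z \<in> S\<close> (necessity uses convexity of \<open>N\<close>,
  sufficiency holds for any \<open>N\<close>). For a stationary point \<open>x\<^sub>k\<close> of (P\<open>\<^sub>\<lambda>\<close>) and a feasible
  \<open>z\<close> the envelope term of \<open>z\<close> vanishes, so after dividing by \<open>\<lambda>\<^sub>k\<close> the inequality reads
  \<open>\<parallel>x\<^sub>k\<parallel>\<^sub>1 (z \<bullet> x\<^sub>k) \<le> \<parallel>z\<parallel>\<^sub>1 \<parallel>x\<^sub>k\<parallel>\<^sup>2\<close>, which passes to the limit. The bound on
  \<open>Q\<^sub>\<lambda>\<^sub>k(x\<^sub>k) / \<lambda>\<^sub>k\<close> forces the envelope at \<open>A x\<^sub>k\<close> to vanish in the limit, so every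
  accumulation point is feasible, and it is nonzero because \<open>\<parallel>b\<parallel> > \<epsilon>\<close>.\<close>

lemma ereal_le_diff_divide_iff:
  assumes "r > 0"
  shows "ereal c \<le> (y - ereal a) / ereal r \<longleftrightarrow> ereal (a + c * r) \<le> y"
  using assms by (cases y) (auto simp: field_simps)

lemma field_le_epsilon_mult:
  fixes p q C :: real
  assumes "\<And>e. e > 0 \<Longrightarrow> p \<le> q + e * C" and "C \<ge> 0"
  shows "p \<le> q"
proof (rule field_le_epsilon)
  fix e :: real assume "e > 0"
  have "e / (C + 1) > 0" using \<open>e > 0\<close> \<open>C \<ge> 0\<close> by simp
  then have "p \<le> q + e / (C + 1) * C" by (rule assms(1))
  also have "\<dots> \<le> q + e" using \<open>e > 0\<close> \<open>C \<ge> 0\<close> by (simp add: field_simps)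
  finally show "p \<le> q + e" .
qed

lemma Liminf_nonneg_iff_eventually:
  fixes f :: "'a \<Rightarrow> ereal"
  shows "0 \<le> Liminf F f \<longleftrightarrow> (\<forall>c<0. \<forall>\<^sub>F w in F. ereal c \<le> f w)"
  unfolding le_Liminf_iff
proof (intro iffI allI impI)
  fix c :: real assume "\<forall>y<0. \<forall>\<^sub>F w in F. y < f w" "c < 0"
  then have "\<forall>\<^sub>F w in F. ereal c < f w" by simp
  then show "\<forall>\<^sub>F w in F. ereal c \<le> f w" by (auto elim: eventually_mono)
next
  fix y :: ereal assume le: "\<forall>c<0. \<forall>\<^sub>F w in F. ereal c \<le> f w" and "y < 0"
  then obtain c where "y < ereal c" "c < 0" using ereal_dense2 by force
  with le have "\<forall>\<^sub>F w in F. ereal c \<le> f w" by blast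
  with \<open>y < ereal c\<close> show "\<forall>\<^sub>F w in F. y < f w"
    by (auto elim: eventually_mono intro: less_le_trans)
qed

lemma stationary_iff_eventually_ge:
  fixes \<phi> :: "'a::real_inner \<Rightarrow> ereal"
  shows "stationary \<phi> x \<longleftrightarrow>
    (\<exists>a. \<phi> x = ereal a \<and> (\<forall>e>0. \<forall>\<^sub>F w in at x. ereal (a - e * norm (w - x)) \<le> \<phi> w))"
proof -
  have "(\<forall>\<^sub>F w in at x. ereal c \<le> (\<phi> w - ereal a) / ereal (norm (w - x))) \<longleftrightarrow>
        (\<forall>\<^sub>F w in at x. ereal (a + c * norm (w - x)) \<le> \<phi> w)" for a c
  proof -
    have "\<forall>\<^sub>F w in at x. norm (w - x) > 0"
      by (simp add: eventually_at_filter)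
    then show ?thesis
      by (intro eventually_subst) (auto elim: eventually_mono simp: ereal_le_diff_divide_iff)
  qed
  moreover have "(\<forall>c<0. P c) \<longleftrightarrow> (\<forall>e>0. P (- e))" for P :: "real \<Rightarrow> bool"
    by (metis neg_0_less_iff_less minus_minus)
  ultimately show ?thesis
    unfolding stationary_def frechet_subdiff_def Liminf_nonneg_iff_eventually
    by (cases "\<phi> x") auto
qed

definition norm_ratio :: "('a::real_normed_vector \<Rightarrow> real) \<Rightarrow> 'a set \<Rightarrow> 'a \<Rightarrow> ereal" where
  "norm_ratio N S w = (if w \<in> S \<and> w \<noteq> 0 then ereal (N w / norm w) else \<infinity>)"

lemma stationary_norm_ratio_domain:
  assumes "stationary (norm_ratio N S) x"
  shows "x \<in> S" "x \<noteq> 0"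
  using assms unfolding stationary_iff_eventually_ge norm_ratio_def by (auto split: if_splits)

lemma convex_on_segment_norm_ratio_le:
  fixes N :: "'a::real_inner \<Rightarrow> real"
  assumes N: "convex_on S N" "N x \<ge> 0" and xz: "x \<in> S" "z \<in> S" "x \<noteq> 0" and t: "0 \<le> t" "t \<le> 1"
  shows "N (x + t *\<^sub>R (z - x)) - N x / norm x * norm (x + t *\<^sub>R (z - x))
    \<le> t * (N z - N x * (z \<bullet> x) / (norm x)\<^sup>2)"
proof -
  define w where "w = x + t *\<^sub>R (z - x)"
  define a where "a = N x / norm x"
  have nx: "norm x > 0" using xz by simp
  have wt: "w = (1 - t) *\<^sub>R x + t *\<^sub>R z" by (simp add: w_def algebra_simps)
  have upper: "N w \<le> (1 - t) * N x + t * N z"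
    unfolding wt using convex_onD[OF N(1)] t xz by simp
  have wx: "w \<bullet> x = (1 - t) * (norm x)\<^sup>2 + t * (z \<bullet> x)"
    by (simp add: wt inner_add_left power2_norm_eq_inner)
  have "(1 - t) * N x + t * (N x * (z \<bullet> x) / (norm x)\<^sup>2) = a * (w \<bullet> x) / norm x"
    unfolding wx using nx by (simp add: a_def power2_eq_square field_simps)
  also have "\<dots> \<le> a * norm w"
    using N(2) nx Cauchy_Schwarz_ineq2[of w x]
    by (simp add: a_def mult_left_mono divide_le_eq mult.assoc)
  finally have "N w - a * norm w \<le> t * (N z - N x * (z \<bullet> x) / (norm x)\<^sup>2)"
    using upper by (simp add: algebra_simps)
  then show ?thesis by (simp add: w_def a_def)
qed

text \<open>Test stationarity along the segment from \<open>x\<close> to \<open>z\<close>.\<close>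
lemma stationary_norm_ratio_imp_ineq:
  fixes N :: "'a::real_inner \<Rightarrow> real"
  assumes N: "convex_on S N" "\<And>w. w \<in> S \<Longrightarrow> N w \<ge> 0"
    and stat: "stationary (norm_ratio N S) x" and z: "z \<in> S"
  shows "N x * (z \<bullet> x) \<le> N z * (norm x)\<^sup>2"
proof (cases "z = x")
  case True
  then show ?thesis by (simp add: power2_norm_eq_inner)
next
  case False
  have x: "x \<in> S" "x \<noteq> 0" using stationary_norm_ratio_domain[OF stat] by auto
  then have nx: "norm x > 0" by simp
  define a where "a = N x / norm x"
  have ge: "\<forall>\<^sub>F w in at x. ereal (a - e * norm (w - x)) \<le> norm_ratio N S w" if "e > 0" for e
    using stat that x unfolding stationary_iff_eventually_ge by (auto simp: norm_ratio_def a_def)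
  define w where "w t = x + t *\<^sub>R (z - x)" for t :: real
  define c where "c = norm (z - x)"
  have w_lim: "filterlim w (at x) (at_right 0)"
  proof -
    have "(w \<longlongrightarrow> x + 0 *\<^sub>R (z - x)) (at_right 0)"
      unfolding w_def by (intro tendsto_intros)
    moreover have "\<forall>\<^sub>F t in at_right 0. w t \<noteq> x"
      using eventually_at_right_less[of 0] by eventually_elim (use False in \<open>auto simp: w_def\<close>)
    ultimately show ?thesis by (simp add: filterlim_at)
  qed
  have "N x * (z \<bullet> x) / (norm x)\<^sup>2 - N z \<le> 0 + e * (c * (norm x + c))" if e: "e > 0" for e
  proof -
    have "\<forall>\<^sub>F t in at_right 0. (0 < t \<and> t < 1) \<and> w t \<noteq> 0 \<and>
        ereal (a - e * norm (w t - x)) \<le> norm_ratio N S (w t)"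
    proof (intro eventually_conj)
      show "\<forall>\<^sub>F t in at_right (0::real). 0 < t" by (rule eventually_at_right_less)
      show "\<forall>\<^sub>F t in at_right 0. t < (1::real)" by (rule order_tendstoD(2)[OF tendsto_ident_at]) simp
      show "\<forall>\<^sub>F t in at_right 0. w t \<noteq> 0"
        using w_lim x(2) by (intro tendsto_imp_eventually_ne) (auto simp: filterlim_at)
      show "\<forall>\<^sub>F t in at_right 0. ereal (a - e * norm (w t - x)) \<le> norm_ratio N S (w t)"
        using eventually_compose_filterlim[OF ge[OF e] w_lim] .
    qed
    then obtain t where t: "0 < t" "t < 1" and wt0: "w t \<noteq> 0"
      and wt_ge: "ereal (a - e * norm (w t - x)) \<le> norm_ratio N S (w t)"
      using eventually_happens'[OF trivial_limit_at_right_real] by blast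
    have "w t = (1 - t) *\<^sub>R x + t *\<^sub>R z" by (simp add: w_def algebra_simps)
    then have "w t \<in> S"
      using t x(1) z convex_on_imp_convex[OF N(1)] by (auto intro: convexD)
    then have "a - e * (t * c) \<le> N (w t) / norm (w t)"
      using wt_ge wt0 t by (simp add: norm_ratio_def w_def c_def)
    then have "(a - e * (t * c)) * norm (w t) \<le> N (w t)"
      using wt0 by (simp add: pos_le_divide_eq)
    then have "- (e * (t * c) * norm (w t)) \<le> N (w t) - a * norm (w t)"
      by (simp add: algebra_simps)
    also have "\<dots> \<le> t * (N z - N x * (z \<bullet> x) / (norm x)\<^sup>2)"
      using convex_on_segment_norm_ratio_le[OF N(1) N(2)[OF x(1)] x(1) z x(2), of t] t
      by (simp add: w_def a_def)
    finally have "t * (N x * (z \<bullet> x) / (norm x)\<^sup>2 - N z) \<le> t * (e * (c * norm (w t)))"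
      by (simp add: algebra_simps)
    then have "N x * (z \<bullet> x) / (norm x)\<^sup>2 - N z \<le> e * (c * norm (w t))"
      using t(1) by (rule mult_left_le_imp_le)
    moreover have "norm (w t) \<le> norm x + c"
      using norm_triangle_ineq[of x "t *\<^sub>R (z - x)"] t mult_left_le_one_le[of c t]
      by (simp add: w_def c_def)
    ultimately show ?thesis
      using e by (smt (verit) c_def mult_left_mono norm_ge_zero)
  qed
  then have "N x * (z \<bullet> x) / (norm x)\<^sup>2 - N z \<le> 0"
    by (rule field_le_epsilon_mult) (auto simp: c_def)
  then show ?thesis
    using nx by (simp add: divide_le_eq)
qed

lemma norm_mult_minus_inner_le:
  fixes x w :: "'a::real_inner"
  shows "norm x * norm w - x \<bullet> w \<le> (norm (w - x))\<^sup>2 / 2"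
proof -
  have "(norm (w - x))\<^sup>2 = (norm w)\<^sup>2 - 2 * (x \<bullet> w) + (norm x)\<^sup>2"
    by (simp add: power2_norm_eq_inner inner_diff_left inner_diff_right inner_commute)
  moreover have "2 * norm x * norm w \<le> (norm x)\<^sup>2 + (norm w)\<^sup>2"
    using sum_squares_bound[of "norm x" "norm w"] by (simp add: power2_eq_square)
  ultimately show ?thesis by simp
qed

lemma stationary_norm_ratioI:
  fixes N :: "'a::real_inner \<Rightarrow> real"
  assumes x: "x \<in> S" "x \<noteq> 0" "N x \<ge> 0"
    and ineq: "\<And>z. z \<in> S \<Longrightarrow> N x * (z \<bullet> x) \<le> N z * (norm x)\<^sup>2"
  shows "stationary (norm_ratio N S) x"
  unfolding stationary_iff_eventually_ge
proof (intro exI conjI allI impI)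
  define a where "a = N x / norm x"
  define c where "c = N x / (norm x)\<^sup>2"
  have nx: "norm x > 0" using x by simp
  have c: "c \<ge> 0" using x nx by (simp add: c_def)
  show "norm_ratio N S x = ereal a" using x by (simp add: norm_ratio_def a_def)
  fix e :: real assume e: "e > 0"
  have "\<forall>\<^sub>F w in at x. norm x / 2 < norm w \<and> c * norm (w - x) < e * norm x"
  proof (intro eventually_conj)
    show "\<forall>\<^sub>F w in at x. norm x / 2 < norm w"
      using nx by (intro order_tendstoD(1)[OF tendsto_norm[OF tendsto_ident_at]]) auto
    have "((\<lambda>w. c * norm (w - x)) \<longlongrightarrow> c * norm (x - x)) (at x)"
      by (intro tendsto_intros)
    then show "\<forall>\<^sub>F w in at x. c * norm (w - x) < e * norm x"
      using e nx by (intro order_tendstoD(2)) auto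
  qed
  then show "\<forall>\<^sub>F w in at x. ereal (a - e * norm (w - x)) \<le> norm_ratio N S w"
  proof eventually_elim
    case (elim w)
    show ?case
    proof (cases "w \<in> S \<and> w \<noteq> 0")
      case False
      then show ?thesis by (auto simp: norm_ratio_def)
    next
      case True
      define r where "r = norm (w - x)"
      have nw: "norm w > 0" using elim nx by linarith
      have "c * (w \<bullet> x) \<le> N w"
        using ineq[of w] True nx by (simp add: c_def divide_le_eq mult.commute)
      moreover have "c * (norm x * norm w) - c * r\<^sup>2 / 2 \<le> c * (w \<bullet> x)"
        using mult_left_mono[OF norm_mult_minus_inner_le[of x w] c]
        by (simp add: r_def inner_commute right_diff_distrib)
      moreover have "c * r\<^sup>2 / 2 \<le> e * r * norm w"
      proof -
        have "e * norm x \<le> e * (2 * norm w)" using elim e by (intro mult_left_mono) auto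
        then have "c * r \<le> 2 * e * norm w" using elim by (simp add: r_def)
        then show ?thesis
          using mult_right_mono[of "c * r" "2 * e * norm w" r] by (simp add: r_def power2_eq_square mult_ac)
      qed
      moreover have "c * (norm x * norm w) = a * norm w"
        using nx by (simp add: a_def c_def power2_eq_square)
      ultimately have "(a - e * r) * norm w \<le> N w"
        unfolding left_diff_distrib by linarith
      then show ?thesis
        using True nw by (simp add: norm_ratio_def r_def pos_le_divide_eq)
    qed
  qed
qed

lemma convex_on_compose_mono:
  assumes h: "convex_on S h" and g: "convex_on T g" "mono_on T g" and hS: "h ` S \<subseteq> T"
  shows "convex_on S (\<lambda>x. g (h x))"
  unfolding convex_on_def
proof (intro conjI ballI allI impI)
  show "convex S" using convex_on_imp_convex[OF h] .
  fix x y and u v :: real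
  assume xy: "x \<in> S" "y \<in> S" and uv: "0 \<le> u" "0 \<le> v" "u + v = 1"
  have hxy: "h x \<in> T" "h y \<in> T" using xy hS by auto
  then have "u * h x + v * h y \<in> T"
    using convexD[OF convex_on_imp_convex[OF g(1)]] uv by simp
  moreover have "h (u *\<^sub>R x + v *\<^sub>R y) \<le> u * h x + v * h y"
    using h xy uv unfolding convex_on_def by blast
  moreover have "h (u *\<^sub>R x + v *\<^sub>R y) \<in> T"
    using convexD[OF convex_on_imp_convex[OF h]] xy uv hS by blast
  ultimately have "g (h (u *\<^sub>R x + v *\<^sub>R y)) \<le> g (u * h x + v * h y)"
    using mono_onD[OF g(2)] by blast
  also have "\<dots> \<le> u * g (h x) + v * g (h y)"
    using g(1) hxy uv unfolding convex_on_def by simp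
  finally show "g (h (u *\<^sub>R x + v *\<^sub>R y)) \<le> u * g (h x) + v * g (h y)" .
qed

lemma convex_on_max:
  assumes "convex_on S f" "convex_on S g"
  shows "convex_on S (\<lambda>x. max (f x) (g x))"
  unfolding convex_on_def
proof (intro conjI ballI allI impI)
  show "convex S" using convex_on_imp_convex[OF assms(1)] .
  fix x y and u v :: real
  assume xy: "x \<in> S" "y \<in> S" and uv: "0 \<le> u" "0 \<le> v" "u + v = 1"
  have "u * f x + v * f y \<le> u * max (f x) (g x) + v * max (f y) (g y)"
   and "u * g x + v * g y \<le> u * max (f x) (g x) + v * max (f y) (g y)"
    using uv by (intro add_mono mult_left_mono; simp)+
  then show "max (f (u *\<^sub>R x + v *\<^sub>R y)) (g (u *\<^sub>R x + v *\<^sub>R y))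
      \<le> u * max (f x) (g x) + v * max (f y) (g y)"
    using assms xy uv unfolding convex_on_def by (smt (verit))
qed

lemma convex_on_compose_linear:
  assumes "convex_on UNIV f" "linear L"
  shows "convex_on UNIV (\<lambda>x. f (L x))"
  using assms by (simp add: convex_on_def linear_add linear_scale)

lemma convex_on_sum_fun:
  assumes "\<And>i. i \<in> I \<Longrightarrow> convex_on S (f i)" "convex S"
  shows "convex_on S (\<lambda>x. \<Sum>i\<in>I. f i x)"
  using assms by (induction I rule: infinite_finite_induct) (auto simp: convex_on_const)

lemma convex_on_l1norm: "convex_on UNIV (l1norm :: real^'n \<Rightarrow> real)"
proof -
  have "convex_on UNIV (\<lambda>x::real^'n. \<bar>x $ i\<bar>)" for i
    using convex_on_compose_linear[OF convex_on_dist[of UNIV "0::real"] bounded_linear_vec_nth[THEN bounded_linear.linear]]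
    by (simp add: dist_real_def real_norm_def)
  then show ?thesis
    unfolding l1norm_def[abs_def] by (intro convex_on_sum_fun) auto
qed

lemma convex_on_env: "convex_on UNIV (env b \<epsilon>)"
proof -
  have excess: "convex_on UNIV (\<lambda>y. max 0 (norm (y - b) - \<epsilon>))"
    using convex_on_dist[of UNIV b]
    by (intro convex_on_max convex_on_diff) (auto simp: convex_on_const concave_on_const dist_norm norm_minus_commute)
  have "convex_on UNIV (\<lambda>y. (max 0 (norm (y - b) - \<epsilon>))\<^sup>2)"
    using convex_power2 by (intro convex_on_compose_mono[OF excess, of "{0..}"])
      (auto intro: convex_on_subset mono_onI power_mono)
  then show ?thesis
    unfolding env_def[abs_def] by (intro convex_on_cmul) auto
qed

lemma l1norm_nonneg: "l1norm x \<ge> 0"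
  unfolding l1norm_def by (simp add: sum_nonneg)

lemma env_nonneg: "env b \<epsilon> y \<ge> 0"
  unfolding env_def by simp

lemma env_eq_0_iff: "env b \<epsilon> y = 0 \<longleftrightarrow> y \<in> Cset b \<epsilon>"
  unfolding env_def Cset_def by auto

lemma tendsto_l1norm:
  fixes f :: "'a \<Rightarrow> real^'n"
  assumes "(f \<longlongrightarrow> a) F"
  shows "((\<lambda>k. l1norm (f k)) \<longlongrightarrow> l1norm a) F"
  unfolding l1norm_def by (intro tendsto_sum tendsto_rabs tendsto_vec_nth assms)

lemma tendsto_env_matrix:
  fixes f :: "'a \<Rightarrow> real^'n" and A :: "real^'n^'m"
  assumes "(f \<longlongrightarrow> a) F"
  shows "((\<lambda>k. env b \<epsilon> (A *v f k)) \<longlongrightarrow> env b \<epsilon> (A *v a)) F"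
proof -
  have "((\<lambda>k. A *v f k) \<longlongrightarrow> A *v a) F"
    using matrix_vector_mul_linear[THEN linear_conv_bounded_linear[THEN iffD1]]
    by (rule bounded_linear.tendsto) (rule assms)
  then show ?thesis unfolding env_def by (intro tendsto_intros)
qed

lemma Qlam_eq_norm_ratio:
  "Qlam A b \<epsilon> d lam = norm_ratio (\<lambda>x. lam * l1norm x + env b \<epsilon> (A *v x)) (Dset d)"
  by (simp add: fun_eq_iff Qlam_def norm_ratio_def)

lemma Phi_eq_norm_ratio: "Phi A b \<epsilon> d = norm_ratio l1norm (Dset d \<inter> {x. A *v x \<in> Cset b \<epsilon>})"
  by (auto simp: fun_eq_iff Phi_def norm_ratio_def)

lemma Dset_eq_cball: "Dset d = cball 0 d"
  by (auto simp: Dset_def)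

lemma stationary_Qlam_domain:
  assumes "stationary (Qlam A b \<epsilon> d lam) x"
  shows "x \<in> Dset d" "x \<noteq> 0"
  using stationary_norm_ratio_domain assms unfolding Qlam_eq_norm_ratio by blast+

lemma stationary_Qlam_feasible_ineq:
  fixes A :: "real^'n^'m"
  assumes stat: "stationary (Qlam A b \<epsilon> d lam) x" and lam: "lam > 0"
    and z: "z \<in> Dset d" "A *v z \<in> Cset b \<epsilon>"
  shows "l1norm x * (z \<bullet> x) \<le> l1norm z * (norm x)\<^sup>2"
proof (cases "z \<bullet> x \<le> 0")
  case True
  then show ?thesis
    using l1norm_nonneg[of x] l1norm_nonneg[of z] by (simp add: mult_nonneg_nonpos order_trans[of _ 0])
next
  case False
  define N where "N = (\<lambda>y. lam * l1norm y + env b \<epsilon> (A *v y))"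
  have "convex_on UNIV N"
    unfolding N_def using lam
    by (intro convex_on_add convex_on_cmul convex_on_l1norm
        convex_on_compose_linear[OF convex_on_env] matrix_vector_mul_linear) auto
  then have "convex_on (Dset d) N"
    unfolding Dset_eq_cball by (rule convex_on_subset) auto
  moreover have "stationary (norm_ratio N (Dset d)) x"
    using stat by (simp add: Qlam_eq_norm_ratio N_def)
  ultimately have "N x * (z \<bullet> x) \<le> N z * (norm x)\<^sup>2"
    using z(1) lam
    by (intro stationary_norm_ratio_imp_ineq) (auto simp: N_def l1norm_nonneg env_nonneg)
  moreover have "lam * l1norm x * (z \<bullet> x) \<le> N x * (z \<bullet> x)"
    using False env_nonneg[of b \<epsilon> "A *v x"] by (intro mult_right_mono) (auto simp: N_def)
  moreover have "N z = lam * l1norm z"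
    using z(2) by (simp add: N_def env_eq_0_iff)
  ultimately have "lam * (l1norm x * (z \<bullet> x)) \<le> lam * (l1norm z * (norm x)\<^sup>2)"
    by (simp add: mult.assoc)
  then show ?thesis using lam by simp
qed

lemma stationary_Qlam_env_bound:
  assumes stat: "stationary (Qlam A b \<epsilon> d lam) x" and lam: "lam > 0"
    and bound: "Qlam A b \<epsilon> d lam x / ereal lam \<le> ereal R"
  shows "env b \<epsilon> (A *v x) \<le> R * lam * norm x"
proof -
  have x: "x \<in> Dset d" "x \<noteq> 0" using stationary_Qlam_domain[OF stat] by auto
  then have "(lam * l1norm x + env b \<epsilon> (A *v x)) / norm x / lam \<le> R"
    using bound lam by (simp add: Qlam_def)
  then have "lam * l1norm x + env b \<epsilon> (A *v x) \<le> R * lam * norm x"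
    using x lam by (simp add: divide_le_eq mult_ac)
  then show ?thesis
    using l1norm_nonneg[of x] lam by (smt (verit) mult_nonneg_nonneg)
qed

lemma stationary_Qlam_limit:
  fixes A :: "real^'n^'m" and x :: "nat \<Rightarrow> real^'n"
  assumes bnorm: "norm b > \<epsilon>" and lam_pos: "\<And>k. lam k > 0" and lam_lim: "lam \<longlonglongrightarrow> 0"
    and stat: "\<And>k. stationary (Qlam A b \<epsilon> d (lam k)) (x k)"
    and bound: "\<And>k. Qlam A b \<epsilon> d (lam k) (x k) / ereal (lam k) \<le> ereal R"
    and lim: "x \<longlonglongrightarrow> xs"
  shows "xs \<in> Dset d \<and> A *v xs \<in> Cset b \<epsilon> \<and> stationary (Phi A b \<epsilon> d) xs"
proof -
  have "x k \<in> cball 0 d" for k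
    using stationary_Qlam_domain(1)[OF stat] by (simp add: Dset_eq_cball)
  then have xD: "xs \<in> Dset d"
    unfolding Dset_eq_cball by (rule closed_sequentially[OF closed_cball _ lim])
  have "(\<lambda>k. R * lam k * norm (x k)) \<longlonglongrightarrow> R * 0 * norm xs"
    by (intro tendsto_intros lam_lim lim)
  then have "env b \<epsilon> (A *v xs) \<le> R * 0 * norm xs"
    using stationary_Qlam_env_bound[OF stat lam_pos bound]
    by (intro LIMSEQ_le[OF tendsto_env_matrix[OF lim]]) auto
  then have xC: "A *v xs \<in> Cset b \<epsilon>"
    using env_nonneg[of b \<epsilon> "A *v xs"] by (simp add: env_eq_0_iff[symmetric])
  have x0: "xs \<noteq> 0"
    using xC bnorm by (auto simp: Cset_def)
  have "l1norm xs * (z \<bullet> xs) \<le> l1norm z * (norm xs)\<^sup>2"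
    if "z \<in> Dset d \<inter> {z. A *v z \<in> Cset b \<epsilon>}" for z
    using stationary_Qlam_feasible_ineq[OF stat lam_pos] that
    by (intro LIMSEQ_le[of "\<lambda>k. l1norm (x k) * (z \<bullet> x k)" _ "\<lambda>k. l1norm z * (norm (x k))\<^sup>2"]
        tendsto_intros tendsto_l1norm lim) auto
  then have "stationary (Phi A b \<epsilon> d) xs"
    unfolding Phi_eq_norm_ratio using xD xC x0 l1norm_nonneg
    by (intro stationary_norm_ratioI) auto
  with xD xC show ?thesis by blast
qed

theorem mainTheorem5:
  fixes A :: "real^'n^'m" and b :: "real^'m" and \<epsilon> d :: real
    and lam :: "nat \<Rightarrow> real" and x :: "nat \<Rightarrow> real^'n"
  assumes eps: "\<epsilon> \<ge> 0" and bnorm: "norm b > \<epsilon>" and dpos: "d > 0"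
    and lam_dec: "decseq lam" and lam_pos: "\<And>k. lam k > 0"
    and lam_lim: "lam \<longlonglongrightarrow> 0"
    and stat: "\<And>k. stationary (Qlam A b \<epsilon> d (lam k)) (x k)"
  shows "bounded (range x) \<and>
    ((interior (Dset d) \<inter> interior {z. A *v z \<in> Cset b \<epsilon>} \<noteq> {} \<and>
      (\<exists>xh. xh \<in> Dset d \<and> A *v xh \<in> Cset b \<epsilon> \<and>
         (\<forall>k. Qlam A b \<epsilon> d (lam k) (x k) / ereal (lam k) \<le> ereal (l1norm xh / norm xh))))
     \<longrightarrow> (\<forall>xs r. strict_mono r \<and> (x \<circ> r) \<longlonglongrightarrow> xs \<longrightarrow>
            xs \<in> Dset d \<and> A *v xs \<in> Cset b \<epsilon> \<and> stationary (Phi A b \<epsilon> d) xs))"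
proof -
  have "bounded (range x)"
    using stationary_Qlam_domain(1)[OF stat] unfolding bounded_iff Dset_def by blast
  moreover have "xs \<in> Dset d \<and> A *v xs \<in> Cset b \<epsilon> \<and> stationary (Phi A b \<epsilon> d) xs"
    if bound: "\<forall>k. Qlam A b \<epsilon> d (lam k) (x k) / ereal (lam k) \<le> ereal R"
      and r: "strict_mono r" and lim: "(x \<circ> r) \<longlonglongrightarrow> xs" for R xs r
  proof -
    have "(\<lambda>k. lam (r k)) \<longlonglongrightarrow> 0" "(\<lambda>k. x (r k)) \<longlonglongrightarrow> xs"
      using LIMSEQ_subseq_LIMSEQ[OF lam_lim r] lim by (auto simp: o_def)
    then show ?thesis
      using stationary_Qlam_limit[OF bnorm lam_pos _ stat] bound by blast
  qed
  ultimately show ?thesis by blast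
qed

end
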